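(* Fix $\epsilon>0$. For all $u\in\mathbb{R}^k$, $y\in\mathcal{Y}$ and permutations $\pi$ of $[k]$, $\hat\Psi(\pi(u\odot y))=\pi(\hat\Psi(u)\odot y)$, where $(\pi x)_i=x_{\pi_i}$ and $\pi$ and $\odot y$ act on sets elementwise.
   Context: $[k]=\{1,\dots,k\}$, $\mathcal{Y}=\{-1,1\}^k$, $\mathcal{V}=\{-1,0,1\}^k$. $u\odot u'$ entrywise product, $|u|$ entrywise absolute value, $\mathbbm{1}$ all-ones; $\boxed{u}=\mathrm{sign}(u)\odot\min(|u|,\mathbbm{1})$. For $A\subseteq\mathbb{R}^k$, $d_\infty(A,u)=\inf_{a\in A}\|a-u\|_\infty$. For a permutation $\sigma$ and $i\in\{0,\dots,k\}$, $\mathbbm{1}_{\sigma,i}$ is the indicator vector of $\{\sigma_1,\dots,\sigma_i\}$; $V_{\sigma,y}=\{\mathbbm{1}_{\sigma,i}\odot y: i=0,\dots,k\}$; $\mathcal{V}^{\text{face}}=\bigcup_{\sigma,y\in\mathcal{Y}}2^{V_{\sigma,y}}$; $\hat\Psi(u)=\bigcap\{V\in\mathcal{V}^{\text{face}}:d_\infty(\mathrm{conv}\,V,\boxed{u})<\epsilon\}$. *)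

theory Defs
  imports "HOL-Analysis.Analysis" "HOL-Library.Extended_Real"
begin

text \<open>Vectors in R^k are modelled as real^'k for a finite index type 'k (k = CARD('k)).
  Entrywise product is the componentwise multiplication on vec.\<close>

definition sign_vecs :: "(real^'k) set" where
  "sign_vecs = {y. \<forall>i. y $ i = -1 \<or> y $ i = 1}"

definition boxv :: "real^'k \<Rightarrow> real^'k" where
  "boxv u = (\<chi> i. sgn (u $ i) * min \<bar>u $ i\<bar> 1)"

definition linf :: "real^'k \<Rightarrow> real" where
  "linf v = Max (range (\<lambda>i. \<bar>v $ i\<bar>))"

text \<open>d_infinity(A,u) = inf over a in A of the sup-norm distance; +infinity for empty A.\<close>
definition dinf :: "(real^'k) set \<Rightarrow> real^'k \<Rightarrow> ereal" where
  "dinf A u = (INF a\<in>A. ereal (linf (a - u)))"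

text \<open>A permutation sigma of [k] is given as the list [sigma_1,...,sigma_k]: a distinct
  enumeration of all indices.\<close>
definition enum_perm :: "'k list \<Rightarrow> bool" where
  "enum_perm \<sigma> \<longleftrightarrow> distinct \<sigma> \<and> set \<sigma> = (UNIV :: 'k set)"

definition ind_vec :: "('k::finite) list \<Rightarrow> nat \<Rightarrow> real^'k" where
  "ind_vec \<sigma> i = (\<chi> j. if j \<in> set (take i \<sigma>) then 1 else 0)"

definition Vsig :: "('k::finite) list \<Rightarrow> real^'k \<Rightarrow> (real^'k) set" where
  "Vsig \<sigma> y = {ind_vec \<sigma> i * y | i. i \<le> CARD('k)}"

definition Vface :: "(real^'k::finite) set set" where
  "Vface = (\<Union>{Pow (Vsig \<sigma> y) | \<sigma> y. enum_perm \<sigma> \<and> y \<in> sign_vecs})"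

definition Psi_hat :: "real \<Rightarrow> real^'k::finite \<Rightarrow> (real^'k) set" where
  "Psi_hat \<epsilon> u = \<Inter>{V \<in> Vface. dinf (convex hull V) (boxv u) < ereal \<epsilon>}"

definition permv :: "('k \<Rightarrow> 'k) \<Rightarrow> real^'k \<Rightarrow> real^'k" where
  "permv \<pi> x = (\<chi> i. x $ (\<pi> i))"

end

theory Submission
  imports Defs
begin

text \<open>The signed permutation \<open>T v = \<pi>(v \<odot> y)\<close> is a linear bijection that preserves the
  sup-norm and commutes with the clipping \<open>boxv\<close>. It maps the vertex set of \<open>(\<sigma>, y')\<close> onto
  that of \<open>(\<pi>\<inverse> \<circ> \<sigma>, \<pi>(y' \<odot> y))\<close>, and its inverse is again a signed permutation, so
  \<open>V \<mapsto> T V\<close> permutes the faces. Hence the faces within distance \<open>\<epsilon>\<close> of \<open>boxv (T u) = T (boxv u)\<close>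
  are exactly the images under \<open>T\<close> of those within distance \<open>\<epsilon>\<close> of \<open>boxv u\<close>, and the
  bijection \<open>T\<close> commutes with their intersection.\<close>

definition signed_permv :: "('k \<Rightarrow> 'k) \<Rightarrow> real^'k \<Rightarrow> real^'k \<Rightarrow> real^'k" where
  "signed_permv \<pi> y v = permv \<pi> (v * y)"

lemma signed_permv_nth [simp]: "signed_permv \<pi> y v $ i = v $ \<pi> i * y $ \<pi> i"
  by (simp add: signed_permv_def permv_def)

lemma sign_vecs_cases: "y \<in> sign_vecs \<Longrightarrow> y $ i = -1 \<or> y $ i = 1"
  by (simp add: sign_vecs_def)

lemma sign_vecs_mult_self: "y \<in> sign_vecs \<Longrightarrow> y $ i * y $ i = 1"
  using sign_vecs_cases[of y i] by auto

lemma abs_sign_vecs: "y \<in> sign_vecs \<Longrightarrow> \<bar>y $ i\<bar> = 1"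
  using sign_vecs_cases[of y i] by auto

lemma permv_sign_vecs: "y \<in> sign_vecs \<Longrightarrow> permv \<pi> y \<in> sign_vecs"
  by (simp add: sign_vecs_def permv_def)

lemma signed_permv_sign_vecs:
  assumes "y \<in> sign_vecs" "y' \<in> sign_vecs"
  shows "signed_permv \<pi> y y' \<in> sign_vecs"
proof -
  have "y' $ \<pi> i * y $ \<pi> i = -1 \<or> y' $ \<pi> i * y $ \<pi> i = 1" for i
    using sign_vecs_cases[OF assms(1), of "\<pi> i"] sign_vecs_cases[OF assms(2), of "\<pi> i"] by auto
  then show ?thesis
    by (simp add: sign_vecs_def)
qed

lemma linear_signed_permv: "linear (signed_permv \<pi> y)"
  by (rule linearI) (simp_all add: vec_eq_iff algebra_simps)

lemma signed_permv_inverse: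
  assumes "\<pi> permutes UNIV" "y \<in> sign_vecs"
  shows "signed_permv (inv \<pi>) (permv \<pi> y) (signed_permv \<pi> y v) = v"
    and "signed_permv \<pi> y (signed_permv (inv \<pi>) (permv \<pi> y) v) = v"
  using permutes_inverses[OF assms(1)] sign_vecs_mult_self[OF assms(2)]
  by (simp_all add: vec_eq_iff permv_def algebra_simps)

lemma bij_signed_permv:
  assumes "\<pi> permutes UNIV" "y \<in> sign_vecs"
  shows "bij (signed_permv \<pi> y)"
  using signed_permv_inverse[OF assms]
  by (intro o_bij[where g = "signed_permv (inv \<pi>) (permv \<pi> y)"]) auto

lemma linf_signed_permv:
  assumes "\<pi> permutes UNIV" "y \<in> sign_vecs"
  shows "linf (signed_permv \<pi> y v) = linf v"
proof -
  have "range (\<lambda>i. \<bar>signed_permv \<pi> y v $ i\<bar>) = (\<lambda>i. \<bar>v $ i\<bar>) ` range \<pi>"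
    by (auto simp: abs_mult abs_sign_vecs[OF assms(2)])
  also have "range \<pi> = UNIV"
    using assms(1) by (simp add: permutes_surj)
  finally show ?thesis
    by (simp add: linf_def)
qed

lemma dinf_signed_permv_image:
  assumes "\<pi> permutes UNIV" "y \<in> sign_vecs"
  shows "dinf (signed_permv \<pi> y ` C) (signed_permv \<pi> y b) = dinf C b"
proof -
  have "signed_permv \<pi> y a - signed_permv \<pi> y b = signed_permv \<pi> y (a - b)" for a
    by (simp add: vec_eq_iff algebra_simps)
  then show ?thesis
    by (simp add: dinf_def image_image linf_signed_permv[OF assms])
qed

lemma boxv_signed_permv:
  assumes "y \<in> sign_vecs"
  shows "boxv (signed_permv \<pi> y u) = signed_permv \<pi> y (boxv u)"
proof (rule vec_eq_iff[THEN iffD2], rule allI)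
  fix i
  show "boxv (signed_permv \<pi> y u) $ i = signed_permv \<pi> y (boxv u) $ i"
    using sign_vecs_cases[OF assms, of "\<pi> i"] by (auto simp: boxv_def)
qed

lemma enum_perm_map:
  assumes "bij f" "enum_perm \<sigma>"
  shows "enum_perm (map f \<sigma>)"
  using assms by (simp add: enum_perm_def distinct_map bij_is_inj inj_on_subset bij_is_surj)

lemma signed_permv_image_Vsig:
  assumes "\<pi> permutes UNIV" "y \<in> sign_vecs"
  shows "signed_permv \<pi> y ` Vsig \<sigma> y' = Vsig (map (inv \<pi>) \<sigma>) (signed_permv \<pi> y y')"
proof -
  have "j \<in> set (take i (map (inv \<pi>) \<sigma>)) \<longleftrightarrow> \<pi> j \<in> set (take i \<sigma>)" for i j
    using permutes_inverses[OF assms(1)] by (simp add: take_map) (metis image_iff)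
  then have "signed_permv \<pi> y (ind_vec \<sigma> i * y') = ind_vec (map (inv \<pi>) \<sigma>) i * signed_permv \<pi> y y'"
    for i
    by (simp add: vec_eq_iff ind_vec_def)
  moreover have "Vsig s z = (\<lambda>i. ind_vec s i * z) ` {..CARD('a)}" for s and z :: "real^'a"
    unfolding Vsig_def by auto
  ultimately show ?thesis
    by (simp add: image_image)
qed

lemma signed_permv_image_Vface:
  assumes "\<pi> permutes UNIV" "y \<in> sign_vecs" "V \<in> Vface"
  shows "signed_permv \<pi> y ` V \<in> Vface"
proof -
  obtain \<sigma> y' where \<sigma>: "enum_perm \<sigma>" and y': "y' \<in> sign_vecs" and V: "V \<subseteq> Vsig \<sigma> y'"
    using assms(3) unfolding Vface_def by auto
  have "signed_permv \<pi> y ` V \<subseteq> Vsig (map (inv \<pi>) \<sigma>) (signed_permv \<pi> y y')"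
    using V signed_permv_image_Vsig[OF assms(1,2)] by blast
  moreover have "enum_perm (map (inv \<pi>) \<sigma>)"
    using assms(1) \<sigma> by (simp add: enum_perm_map bij_imp_bij_inv permutes_bij)
  ultimately show ?thesis
    unfolding Vface_def using signed_permv_sign_vecs[OF assms(2) y'] by blast
qed

lemma signed_permv_image_Vface_iff:
  assumes "\<pi> permutes UNIV" "y \<in> sign_vecs"
  shows "signed_permv \<pi> y ` V \<in> Vface \<longleftrightarrow> V \<in> Vface"
proof
  assume "signed_permv \<pi> y ` V \<in> Vface"
  then have "signed_permv (inv \<pi>) (permv \<pi> y) ` signed_permv \<pi> y ` V \<in> Vface"
    by (rule signed_permv_image_Vface[OF permutes_inv[OF assms(1)] permv_sign_vecs[OF assms(2)]])
  then show "V \<in> Vface"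
    by (simp add: image_image signed_permv_inverse[OF assms])
qed (rule signed_permv_image_Vface[OF assms])

lemma Inter_Collect_bij_image:
  assumes "bij f"
  shows "\<Inter>{W. P W} = f ` \<Inter>{V. P (f ` V)}"
proof -
  have "{W. P W} = image f ` {V. P (f ` V)}"
  proof (intro equalityI subsetI)
    fix W
    assume "W \<in> {W. P W}"
    moreover have "W = f ` (f -` W)"
      using surj_image_vimage_eq[OF bij_is_surj[OF assms]] by simp
    ultimately show "W \<in> image f ` {V. P (f ` V)}"
      by (intro image_eqI[of _ _ "f -` W"]) auto
  qed auto
  then show ?thesis
    using bij_image_INT[OF assms, of id] by simp
qed

theorem lemma12:
  fixes \<epsilon> :: real and u y :: "real^'k::finite" and \<pi> :: "'k \<Rightarrow> 'k"
  assumes "\<epsilon> > 0" and "y \<in> sign_vecs" and "\<pi> permutes UNIV"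
  shows "Psi_hat \<epsilon> (permv \<pi> (u * y)) = (\<lambda>v. permv \<pi> (v * y)) ` Psi_hat \<epsilon> u"
proof -
  let ?T = "signed_permv \<pi> y"
  have dinf_eq: "dinf (convex hull (?T ` V)) (boxv (?T u)) = dinf (convex hull V) (boxv u)" for V
    using assms(2,3)
    by (simp add: convex_hull_linear_image[OF linear_signed_permv, symmetric]
        boxv_signed_permv dinf_signed_permv_image)
  have "Psi_hat \<epsilon> (?T u) =
      ?T ` \<Inter>{V. ?T ` V \<in> Vface \<and> dinf (convex hull (?T ` V)) (boxv (?T u)) < \<epsilon>}"
    unfolding Psi_hat_def by (rule Inter_Collect_bij_image[OF bij_signed_permv[OF assms(3,2)]])
  also have "\<dots> = ?T ` Psi_hat \<epsilon> u"
    unfolding Psi_hat_def dinf_eq signed_permv_image_Vface_iff[OF assms(3,2)] by (rule refl)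
  finally show ?thesis
    unfolding signed_permv_def .
qed

end
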